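(* Let $R$ be Rado's poset. Then $\bigcup AM_m(R)$ is bqo for every integer $m$, and $R$ embeds into $AM(R)$.
   Context: Rado's poset $R$ has underlying set $V=\{(m,n)\in\mathbb{N}^2: m<n\}$ with $(m,n)\leq_R(m',n')$ iff either ($m=m'$ and $n\leq n'$) or $n<m'$. $AM(R)$ is the set of maximal antichains of $R$ ordered by domination ($X\leq Y$ iff each $x\in X$ is below some $y\in Y$); $AM_m(R)$ is the set of maximal antichains with exactly $m$ elements, and $\bigcup AM_m(R)$ is the union of these antichains with the order induced by $R$. An embedding is a map $e$ with $x\leq y\iff e(x)\leq e(y)$. Barriers and bqo: finite subsets of $\mathbb{N}$ are identified with their increasing enumerations; $s\triangleleft t$ means there is a finite $r\subseteq\mathbb{N}$ with $s$ a proper initial segment of $r$ and $t$ equal to $r$ minus its least element. A barrier is an infinite set $B$ of finite subsets of $\mathbb{N}$, no member a proper subset of another, such that every infinite $X\subseteq\bigcup B$ has a nonempty initial segment in $B$; its order type is that of $B$ under the lexicographic order. A map $f$ from a barrier into a quasi-order $Q$ is good if $f(s)\leq f(t)$ for some $s\triangleleft t$; $Q$ is $\alpha$-bqo if every map from a barrier of order type at most $\alpha$ into $Q$ is good, and bqo if it is $\alpha$-bqo for all countable $\alpha$. *)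

theory Defs
  imports Main
begin

definition rado_V :: "(nat \<times> nat) set" where
  "rado_V = {(m, n). m < n}"

definition rado_le :: "nat \<times> nat \<Rightarrow> nat \<times> nat \<Rightarrow> bool" where
  "rado_le x y = ((fst x = fst y \<and> snd x \<le> snd y) \<or> snd x < fst y)"

definition antichain_on :: "'a set \<Rightarrow> ('a \<Rightarrow> 'a \<Rightarrow> bool) \<Rightarrow> 'a set \<Rightarrow> bool" where
  "antichain_on P le A = (A \<subseteq> P \<and> (\<forall>x\<in>A. \<forall>y\<in>A. x \<noteq> y \<longrightarrow> \<not> le x y \<and> \<not> le y x))"

definition max_antichain_on :: "'a set \<Rightarrow> ('a \<Rightarrow> 'a \<Rightarrow> bool) \<Rightarrow> 'a set \<Rightarrow> bool" where
  "max_antichain_on P le A =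
     (antichain_on P le A \<and> (\<forall>B. antichain_on P le B \<and> A \<subseteq> B \<longrightarrow> B = A))"

definition AM :: "(nat \<times> nat) set set" where
  "AM = {A. max_antichain_on rado_V rado_le A}"

definition AM_card :: "nat \<Rightarrow> (nat \<times> nat) set set" where
  "AM_card m = {A \<in> AM. finite A \<and> card A = m}"

definition dominated :: "('a \<Rightarrow> 'a \<Rightarrow> bool) \<Rightarrow> 'a set \<Rightarrow> 'a set \<Rightarrow> bool" where
  "dominated le X Y = (\<forall>x\<in>X. \<exists>y\<in>Y. le x y)"

definition initial_segment :: "nat set \<Rightarrow> nat set \<Rightarrow> bool" where
  "initial_segment s r = (s \<subseteq> r \<and> (\<forall>x\<in>s. \<forall>y\<in>r. y < x \<longrightarrow> y \<in> s))"

definition shift_rel :: "nat set \<Rightarrow> nat set \<Rightarrow> bool" (infix "\<lhd>\<^sub>B" 50) where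
  "s \<lhd>\<^sub>B t = (\<exists>r. finite r \<and> initial_segment s r \<and> s \<noteq> r \<and> t = r - {Min r})"

definition barrier :: "nat set set \<Rightarrow> bool" where
  "barrier B =
     (infinite B \<and> (\<forall>s\<in>B. finite s)
      \<and> (\<forall>s\<in>B. \<forall>t\<in>B. \<not> s \<subset> t)
      \<and> (\<forall>X. infinite X \<and> X \<subseteq> \<Union>B \<longrightarrow>
             (\<exists>s\<in>B. s \<noteq> {} \<and> initial_segment s X)))"

definition good_map :: "('a \<Rightarrow> 'a \<Rightarrow> bool) \<Rightarrow> nat set set \<Rightarrow> (nat set \<Rightarrow> 'a) \<Rightarrow> bool" where
  "good_map le B f = (\<exists>s\<in>B. \<exists>t\<in>B. s \<lhd>\<^sub>B t \<and> le (f s) (f t))"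

text \<open>bqo: every map from a barrier into Q is good. (Every barrier has countable order
  type, so this is the same as being alpha-bqo for all countable alpha.)\<close>

definition bqo_on :: "'a set \<Rightarrow> ('a \<Rightarrow> 'a \<Rightarrow> bool) \<Rightarrow> bool" where
  "bqo_on Q le = (\<forall>B f. barrier B \<and> (\<forall>s\<in>B. f s \<in> Q) \<longrightarrow> good_map le B f)"

end

theory Submission
  imports Defs
begin

text \<open>
  In a maximal antichain of Rado's poset with m elements every first coordinate is below m:
  otherwise some column c below it is missed, and a point of column c placed high enough is
  incomparable with the whole antichain. Within one column Rado's order is the well-order of
  the second coordinates, so \<open>\<Union>AM_m(R)\<close> is a union of finitely many well-ordered classes.
  Such a union is bqo: by the Nash-Williams partition theorem (proved with the accept/reject
  diagonalisation of Galvin and Prikry) a bad map from a barrier has constant class on all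
  members inside some infinite set, and a \<open>\<lhd>\<close>-chain of members inside that set then has
  strictly decreasing second coordinates.

  For the embedding, (m, n) is sent to an antichain meeting each of the columns 0, ..., 2m+2
  exactly once, which makes it maximal; its point in column m is (m, 2n+3).
\<close>

section \<open>Nash-Williams' partition theorem\<close>

definition beyond :: "nat set \<Rightarrow> nat set \<Rightarrow> nat set" where
  "beyond s N = {x \<in> N. \<forall>y\<in>s. y < x}"

lemma beyond_subset: "beyond s N \<subseteq> N"
  unfolding beyond_def by auto

lemma beyond_empty [simp]: "beyond {} N = N"
  unfolding beyond_def by auto

lemma beyond_insert: "beyond (insert n s) N = beyond {n} (beyond s N)"
  unfolding beyond_def by auto

lemma infinite_beyond:
  assumes "finite s" and "infinite N"
  shows "infinite (beyond s N)"
proof -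
  have "N - beyond s N \<subseteq> (\<Union>y\<in>s. {..y})"
    unfolding beyond_def by (auto simp: not_less)
  then have "finite (N - beyond s N)"
    using assms(1) by (meson finite_UN_I finite_atMost finite_subset)
  then show ?thesis
    using assms(2) by (metis Diff_infinite_finite)
qed

lemma initial_segment_Un_beyond: "X \<subseteq> beyond s N \<Longrightarrow> initial_segment s (s \<union> X)"
  unfolding initial_segment_def beyond_def by force

lemma initial_segment_linear:
  "initial_segment s X \<Longrightarrow> initial_segment t X \<Longrightarrow> s \<subseteq> t \<or> t \<subseteq> s"
  unfolding initial_segment_def by (metis linorder_neqE_nat subsetI subset_iff)

definition thin :: "nat set set \<Rightarrow> bool" where
  "thin B \<longleftrightarrow> (\<forall>s\<in>B. finite s) \<and> (\<forall>s\<in>B. \<forall>t\<in>B. s \<subseteq> t \<longrightarrow> s = t)"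

lemma barrier_thin: "barrier B \<Longrightarrow> thin B"
  unfolding barrier_def thin_def by blast

lemma thin_finite: "thin B \<Longrightarrow> s \<in> B \<Longrightarrow> finite s"
  unfolding thin_def by blast

lemma thin_subset_eq: "thin B \<Longrightarrow> s \<in> B \<Longrightarrow> t \<in> B \<Longrightarrow> s \<subseteq> t \<Longrightarrow> s = t"
  unfolding thin_def by blast

lemma thin_initial_segment_unique:
  "thin B \<Longrightarrow> s \<in> B \<Longrightarrow> t \<in> B \<Longrightarrow> initial_segment s X \<Longrightarrow> initial_segment t X \<Longrightarrow> s = t"
  using initial_segment_linear thin_subset_eq by metis

lemma fusion_diagonal:
  fixes M :: "nat \<Rightarrow> nat set"
  assumes infinite: "\<And>k. infinite (M k)"
    and shrink: "\<And>k. M (Suc k) \<subseteq> beyond {Inf (M k)} (M k)"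
  shows "infinite (range (\<lambda>k. Inf (M k)))" and "range (\<lambda>k. Inf (M k)) \<subseteq> M 0"
    and "\<And>s. finite s \<Longrightarrow> s \<noteq> {} \<Longrightarrow> s \<subseteq> range (\<lambda>k. Inf (M k)) \<Longrightarrow>
           \<exists>k. s \<subseteq> {..Inf (M k)} \<and> beyond s (range (\<lambda>k. Inf (M k))) \<subseteq> M (Suc k)"
proof -
  define n where "n k = Inf (M k)" for k
  have n_in: "n k \<in> M k" for k
    unfolding n_def using infinite by (metis Inf_nat_def1 finite.emptyI)
  have decreasing: "M j \<subseteq> M k" if "k \<le> j" for j k
    using lift_Suc_antimono_le[of M, OF _ that] shrink beyond_subset by blast
  have "n k < n (Suc k)" for k
    using n_in[of "Suc k"] shrink[of k] unfolding n_def beyond_def by auto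
  then have "strict_mono n"
    by (simp add: strict_mono_Suc_iff)
  then show "infinite (range (\<lambda>k. Inf (M k)))"
    unfolding n_def[symmetric] by (meson finite_imageD infinite_UNIV_nat strict_mono_imp_inj_on)
  show "range (\<lambda>k. Inf (M k)) \<subseteq> M 0"
    using n_in decreasing unfolding n_def by blast
  fix s assume s: "finite s" "s \<noteq> {}" "s \<subseteq> range (\<lambda>k. Inf (M k))"
  then obtain k where k: "Max s = n k"
    unfolding n_def by (metis Max_in imageE subsetD)
  have "beyond s (range n) \<subseteq> M (Suc k)"
  proof
    fix x assume "x \<in> beyond s (range n)"
    then obtain j where "x = n j" "n k < n j"
      using k Max_in[OF s(1,2)] by (auto simp: beyond_def)
    then show "x \<in> M (Suc k)"
      using \<open>strict_mono n\<close> n_in decreasing by (metis Suc_leI strict_mono_less subsetD)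
  qed
  moreover have "s \<subseteq> {..n k}"
    using s(1) k by (auto simp flip: k)
  ultimately show "\<exists>k. s \<subseteq> {..Inf (M k)} \<and> beyond s (range (\<lambda>k. Inf (M k))) \<subseteq> M (Suc k)"
    unfolding n_def by blast
qed

lemma diagonal_thinning:
  assumes mono: "\<And>s M N. P s M \<Longrightarrow> N \<subseteq> M \<Longrightarrow> infinite N \<Longrightarrow> P s N"
    and dense: "\<And>s M. infinite M \<Longrightarrow> \<exists>N\<subseteq>M. infinite N \<and> P s N"
    and "infinite M"
  shows "\<exists>N\<subseteq>M. infinite N \<and> (\<forall>s. finite s \<and> s \<subseteq> N \<longrightarrow> P s (beyond s N))"
proof -
  have dense_finite: "\<exists>N\<subseteq>M. infinite N \<and> (\<forall>s\<in>S. P s N)" if "finite S" "infinite M" for S M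
    using that
  proof (induction S arbitrary: M rule: finite_induct)
    case (insert s S)
    then obtain N1 where "N1 \<subseteq> M" "infinite N1" "\<forall>s\<in>S. P s N1"
      by blast
    moreover obtain N2 where "N2 \<subseteq> N1" "infinite N2" "P s N2"
      using dense \<open>infinite N1\<close> by blast
    ultimately show ?case
      using mono by (intro exI[of _ N2]) blast
  qed auto
  have "\<exists>M'\<subseteq>beyond {Inf M} M. infinite M' \<and> (\<forall>s\<in>Pow {..Inf M}. P s M')" if "infinite M" for M
    using dense_finite infinite_beyond that by simp
  then obtain shrink where shrink: "\<And>M. infinite M \<Longrightarrow>
      shrink M \<subseteq> beyond {Inf M} M \<and> infinite (shrink M) \<and> (\<forall>s\<subseteq>{..Inf M}. P s (shrink M))"
    by (metis PowI)
  obtain M0 where M0: "M0 \<subseteq> M" "infinite M0" "P {} M0"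
    using dense \<open>infinite M\<close> by blast
  define Ms where "Ms k = (shrink ^^ k) M0" for k
  have Ms_Suc: "Ms (Suc k) = shrink (Ms k)" for k
    unfolding Ms_def by simp
  have Ms_infinite: "infinite (Ms k)" for k
    by (induction k) (simp_all add: Ms_Suc shrink Ms_def[of 0] M0(2))
  have Ms_shrink: "Ms (Suc k) \<subseteq> beyond {Inf (Ms k)} (Ms k)" for k
    using shrink[OF Ms_infinite] by (simp add: Ms_Suc)
  define N where "N = range (\<lambda>k. Inf (Ms k))"
  note fusion = fusion_diagonal[of Ms, OF Ms_infinite Ms_shrink, folded N_def]
  have N: "infinite N" "N \<subseteq> M0"
    using fusion(1,2) by (simp_all add: Ms_def)
  have "P s (beyond s N)" if s: "finite s" "s \<subseteq> N" for s
  proof (cases "s = {}")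
    case True
    then show ?thesis
      using mono[OF M0(3) N(2,1)] by simp
  next
    case False
    then obtain k where k: "s \<subseteq> {..Inf (Ms k)}" "beyond s N \<subseteq> Ms (Suc k)"
      using fusion(3)[OF s(1) False s(2)] by blast
    then have "P s (Ms (Suc k))"
      using shrink[OF Ms_infinite] by (simp add: Ms_Suc)
    then show ?thesis
      using mono k(2) infinite_beyond[OF s(1) N(1)] by blast
  qed
  moreover have "N \<subseteq> M"
    using N(2) M0(1) by blast
  ultimately show ?thesis
    using N(1) by blast
qed

definition accepts :: "nat set set \<Rightarrow> nat set \<Rightarrow> nat set \<Rightarrow> bool" where
  "accepts F s M \<longleftrightarrow> (\<forall>X. infinite X \<and> X \<subseteq> M \<longrightarrow> (\<exists>t\<in>F. initial_segment t (s \<union> X)))"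

definition rejects :: "nat set set \<Rightarrow> nat set \<Rightarrow> nat set \<Rightarrow> bool" where
  "rejects F s M \<longleftrightarrow> (\<forall>N\<subseteq>M. infinite N \<longrightarrow> \<not> accepts F s N)"

lemma accepts_mono: "accepts F s M \<Longrightarrow> N \<subseteq> M \<Longrightarrow> accepts F s N"
  unfolding accepts_def by blast

lemma rejects_mono: "rejects F s M \<Longrightarrow> N \<subseteq> M \<Longrightarrow> rejects F s N"
  unfolding rejects_def by blast

lemma finite_accepting_extensions:
  assumes "rejects F s M"
  shows "finite {n \<in> M. accepts F (insert n s) (beyond {n} M)}" (is "finite ?A")
proof (rule ccontr)
  assume "infinite ?A"
  have "accepts F s ?A"
    unfolding accepts_def[of F s]
  proof (intro allI impI)
    fix X assume X: "infinite X \<and> X \<subseteq> ?A"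
    define n where "n = Inf X"
    have "n \<in> X"
      unfolding n_def using X by (intro Inf_nat_def1) auto
    have "n \<le> x" if "x \<in> X" for x
      unfolding n_def using that by (simp add: cInf_lower)
    then have "X - {n} \<subseteq> beyond {n} M"
      using X unfolding beyond_def by fastforce
    moreover have "accepts F (insert n s) (beyond {n} M)"
      using X \<open>n \<in> X\<close> by blast
    moreover have "infinite (X - {n})"
      using X by simp
    ultimately obtain t where "t \<in> F" "initial_segment t (insert n s \<union> (X - {n}))"
      unfolding accepts_def by blast
    moreover have "insert n s \<union> (X - {n}) = s \<union> X"
      using \<open>n \<in> X\<close> by blast
    ultimately show "\<exists>t\<in>F. initial_segment t (s \<union> X)"
      by auto
  qed
  moreover have "?A \<subseteq> M"
    by blast
  ultimately show False
    using assms \<open>infinite ?A\<close> unfolding rejects_def by blast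
qed

lemma hereditary_thinning:
  assumes "infinite N" and "R {}"
    and cofinite: "\<And>s. finite s \<Longrightarrow> s \<subseteq> N \<Longrightarrow> R s \<Longrightarrow> finite {n \<in> beyond s N. \<not> R (insert n s)}"
  shows "\<exists>N'\<subseteq>N. infinite N' \<and> (\<forall>s. finite s \<and> s \<subseteq> N' \<longrightarrow> R s)"
proof -
  define P where "P s M \<longleftrightarrow>
      (finite s \<and> s \<subseteq> N \<and> R s \<longrightarrow> (\<forall>n\<in>M. n \<in> beyond s N \<longrightarrow> R (insert n s)))" for s M
  have "\<exists>N'\<subseteq>N. infinite N' \<and> (\<forall>s. finite s \<and> s \<subseteq> N' \<longrightarrow> P s (beyond s N'))"
  proof (rule diagonal_thinning)
    show "P s M'" if "P s M" "M' \<subseteq> M" for s M M'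
      using that unfolding P_def by blast
    show "\<exists>M'\<subseteq>M. infinite M' \<and> P s M'" if "infinite M" for s M
    proof (cases "finite s \<and> s \<subseteq> N \<and> R s")
      case True
      let ?M' = "M - {n \<in> beyond s N. \<not> R (insert n s)}"
      have "infinite ?M'"
        using True cofinite that by (simp add: Diff_infinite_finite)
      moreover have "P s ?M'"
        unfolding P_def by blast
      ultimately show ?thesis
        by blast
    next
      case False
      then have "P s M"
        unfolding P_def by blast
      then show ?thesis
        using that by blast
    qed
  qed (rule assms(1))
  then obtain N' where N': "N' \<subseteq> N" "infinite N'"
    and P: "\<forall>s. finite s \<and> s \<subseteq> N' \<longrightarrow> P s (beyond s N')"
    by blast
  have "R s" if "finite s" "s \<subseteq> N'" for s
    using that
  proof (induction s rule: finite_linorder_max_induct)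
    case empty
    show ?case by (rule assms(2))
  next
    case (insert b s)
    then have "R s" "P s (beyond s N')"
      using P by auto
    moreover have "b \<in> beyond s N'" "b \<in> beyond s N"
      using insert N'(1) unfolding beyond_def by auto
    ultimately show ?case
      using insert.hyps(1) insert.prems N'(1) unfolding P_def by blast
  qed
  with N' show ?thesis
    by (intro exI[of _ N']) auto
qed

lemma deciding_subset:
  assumes "infinite M"
  shows "\<exists>N\<subseteq>M. infinite N \<and>
    (\<forall>s. finite s \<and> s \<subseteq> N \<longrightarrow> accepts F s (beyond s N) \<or> rejects F s (beyond s N))"
proof (rule diagonal_thinning[where P = "\<lambda>s M. accepts F s M \<or> rejects F s M"])
  show "accepts F s N \<or> rejects F s N" if "accepts F s M \<or> rejects F s M" "N \<subseteq> M" for s M N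
    using that accepts_mono rejects_mono by blast
  show "\<exists>N\<subseteq>M. infinite N \<and> (accepts F s N \<or> rejects F s N)" if "infinite M" for s M
    using that unfolding rejects_def by blast
qed (rule assms)

lemma rejecting_subset_avoids:
  assumes "\<forall>s\<in>F. finite s" and "infinite N" and "rejects F {} N"
    and decides: "\<forall>s. finite s \<and> s \<subseteq> N \<longrightarrow> accepts F s (beyond s N) \<or> rejects F s (beyond s N)"
  shows "\<exists>N'\<subseteq>N. infinite N' \<and> (\<forall>s\<in>F. \<not> s \<subseteq> N')"
proof -
  have "\<exists>N'\<subseteq>N. infinite N' \<and> (\<forall>s. finite s \<and> s \<subseteq> N' \<longrightarrow> rejects F s (beyond s N))"
  proof (rule hereditary_thinning[where R = "\<lambda>s. rejects F s (beyond s N)"])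
    show "finite {n \<in> beyond s N. \<not> rejects F (insert n s) (beyond (insert n s) N)}"
      if s: "finite s" "s \<subseteq> N" "rejects F s (beyond s N)" for s
    proof (rule finite_subset[OF _ finite_accepting_extensions[OF s(3)]])
      have "accepts F (insert n s) (beyond {n} (beyond s N))"
        if n: "n \<in> beyond s N" "\<not> rejects F (insert n s) (beyond (insert n s) N)" for n
      proof -
        have "finite (insert n s)" "insert n s \<subseteq> N"
          using s(1,2) n(1) beyond_subset by auto
        then have "accepts F (insert n s) (beyond (insert n s) N)"
          using decides n(2) by blast
        then show ?thesis
          unfolding beyond_insert[of n s N] .
      qed
      then show "{n \<in> beyond s N. \<not> rejects F (insert n s) (beyond (insert n s) N)}
          \<subseteq> {n \<in> beyond s N. accepts F (insert n s) (beyond {n} (beyond s N))}"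
        by blast
    qed
  qed (use assms(2,3) in simp_all)
  then obtain N' where N': "N' \<subseteq> N" "infinite N'"
    and rejected: "\<forall>s. finite s \<and> s \<subseteq> N' \<longrightarrow> rejects F s (beyond s N)"
    by blast
  have "\<not> s \<subseteq> N'" if "s \<in> F" for s
  proof
    assume "s \<subseteq> N'"
    have "finite s"
      using assms(1) \<open>s \<in> F\<close> by blast
    have "accepts F s (beyond s N)"
      unfolding accepts_def[of F s] using initial_segment_Un_beyond[of _ s N] \<open>s \<in> F\<close> by blast
    moreover have "rejects F s (beyond s N)"
      using rejected \<open>s \<subseteq> N'\<close> \<open>finite s\<close> by blast
    ultimately show False
      using infinite_beyond[OF \<open>finite s\<close> assms(2)] unfolding rejects_def by blast
  qed
  with N' show ?thesis
    by (intro exI[of _ N']) auto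
qed

theorem nash_williams:
  assumes "\<forall>s\<in>F. finite s" and "infinite M"
  shows "\<exists>N\<subseteq>M. infinite N \<and>
    ((\<forall>s\<in>F. \<not> s \<subseteq> N) \<or> (\<forall>X. infinite X \<and> X \<subseteq> N \<longrightarrow> (\<exists>t\<in>F. initial_segment t X)))"
proof -
  obtain N where N: "N \<subseteq> M" "infinite N"
    and decides: "\<forall>s. finite s \<and> s \<subseteq> N \<longrightarrow> accepts F s (beyond s N) \<or> rejects F s (beyond s N)"
    using deciding_subset[OF assms(2), where F = F] by blast
  show ?thesis
  proof (cases "accepts F {} N")
    case True
    then have "\<forall>X. infinite X \<and> X \<subseteq> N \<longrightarrow> (\<exists>t\<in>F. initial_segment t X)"
      unfolding accepts_def by simp
    with N show ?thesis
      by blast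
  next
    case False
    then have "rejects F {} N"
      using decides[rule_format, of "{}"] by simp
    then obtain N' where "N' \<subseteq> N" "infinite N'" "\<forall>s\<in>F. \<not> s \<subseteq> N'"
      using rejecting_subset_avoids[OF assms(1) N(2) _ decides] by blast
    with N(1) show ?thesis
      by (intro exI[of _ N']) auto
  qed
qed

theorem thin_colouring_homogeneous:
  assumes "thin B" and "finite S" and "infinite N" and "\<forall>s\<in>B. s \<subseteq> N \<longrightarrow> c s \<in> S"
  shows "\<exists>N'\<subseteq>N. infinite N' \<and> (\<exists>i. \<forall>s\<in>B. s \<subseteq> N' \<longrightarrow> c s = i)"
  using assms(2-)
proof (induction S arbitrary: N rule: finite_induct)
  case empty
  then show ?case by blast
next
  case (insert a S)
  let ?F = "{s \<in> B. c s = a}"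
  have "\<forall>s\<in>?F. finite s"
    using thin_finite[OF assms(1)] by blast
  then obtain N1 where N1: "N1 \<subseteq> N" "infinite N1"
    and alternative: "(\<forall>s\<in>?F. \<not> s \<subseteq> N1) \<or> (\<forall>X. infinite X \<and> X \<subseteq> N1 \<longrightarrow> (\<exists>t\<in>?F. initial_segment t X))"
    using nash_williams[of ?F, OF _ insert.prems(1)] by blast
  show ?case
  proof (cases "\<forall>s\<in>?F. \<not> s \<subseteq> N1")
    case True
    then have "\<forall>s\<in>B. s \<subseteq> N1 \<longrightarrow> c s \<in> S"
      using insert.prems(2) N1(1) by blast
    then obtain N' i where "N' \<subseteq> N1" "infinite N'" "\<forall>s\<in>B. s \<subseteq> N' \<longrightarrow> c s = i"
      using insert.IH[OF N1(2)] by blast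
    with N1(1) show ?thesis
      by (intro exI[of _ N']) blast
  next
    case False
    have "c s = a" if "s \<in> B" "s \<subseteq> N1" for s
    proof -
      have "finite s"
        using thin_finite[OF assms(1) \<open>s \<in> B\<close>] .
      let ?X = "s \<union> beyond s N1"
      have "infinite ?X" "?X \<subseteq> N1"
        using infinite_beyond[OF \<open>finite s\<close> N1(2)] beyond_subset \<open>s \<subseteq> N1\<close> by auto
      then obtain t where "t \<in> B" "c t = a" "initial_segment t ?X"
        using alternative False by blast
      moreover have "initial_segment s ?X"
        by (rule initial_segment_Un_beyond[of _ s N1]) simp
      ultimately show "c s = a"
        using thin_initial_segment_unique[OF assms(1) \<open>s \<in> B\<close>] by metis
    qed
    with N1 show ?thesis
      by (intro exI[of _ N1]) auto
  qed
qed

section \<open>Finite unions of well-orders are bqo\<close>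

lemma initial_segments_shift_rel:
  assumes "thin B" and "s \<in> B" and "t \<in> B" and "s \<noteq> {}"
    and s: "initial_segment s X" and t: "initial_segment t (X - {Inf X})"
  shows "s \<lhd>\<^sub>B t"
proof -
  define x where "x = Inf X"
  define r where "r = insert x t"
  have least: "x \<le> y" if "y \<in> X" for y
    unfolding x_def using that by (simp add: cInf_lower)
  have "s \<subseteq> X" "t \<subseteq> X - {x}"
    using s t unfolding initial_segment_def x_def by auto
  then have "x \<in> X"
    unfolding x_def using \<open>s \<noteq> {}\<close> by (intro Inf_nat_def1) auto
  have "x \<in> s"
  proof -
    obtain y where "y \<in> s"
      using \<open>s \<noteq> {}\<close> by blast
    then show ?thesis
      using s \<open>x \<in> X\<close> least[of y] \<open>s \<subseteq> X\<close> unfolding initial_segment_def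
      by (cases "x = y") auto
  qed
  have r: "initial_segment r X"
    unfolding initial_segment_def
  proof (intro conjI ballI impI)
    show "r \<subseteq> X"
      using \<open>x \<in> X\<close> \<open>t \<subseteq> X - {x}\<close> unfolding r_def by blast
    fix z y assume "z \<in> r" "y \<in> X" "y < z"
    moreover have "z \<in> t" if "y \<noteq> x"
      using \<open>z \<in> r\<close> \<open>y < z\<close> least[OF \<open>y \<in> X\<close>] that unfolding r_def by auto
    ultimately show "y \<in> r"
      using t unfolding initial_segment_def r_def x_def by blast
  qed
  have "finite r"
    using thin_finite[OF assms(1,3)] unfolding r_def by blast
  have "Min r = x"
    using r least \<open>finite r\<close> unfolding initial_segment_def r_def by (intro Min_eqI) auto
  have "\<not> r \<subseteq> s"
  proof
    assume "r \<subseteq> s"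
    then have "t = s"
      using thin_subset_eq[OF assms(1,3,2)] unfolding r_def by blast
    then show False
      using \<open>x \<in> s\<close> \<open>t \<subseteq> X - {x}\<close> by blast
  qed
  then have "s \<subseteq> r" "s \<noteq> r"
    using initial_segment_linear[OF s r] by auto
  then have "initial_segment s r"
    using s r unfolding initial_segment_def by blast
  moreover have "t = r - {Min r}"
    using \<open>Min r = x\<close> \<open>t \<subseteq> X - {x}\<close> unfolding r_def by auto
  ultimately show ?thesis
    unfolding shift_rel_def using \<open>finite r\<close> \<open>s \<noteq> r\<close> by blast
qed

lemma barrier_initial_segment:
  "barrier B \<Longrightarrow> infinite X \<Longrightarrow> X \<subseteq> \<Union>B \<Longrightarrow> \<exists>s\<in>B. s \<noteq> {} \<and> initial_segment s X"
  unfolding barrier_def by blast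

lemma barrier_shift_sequence:
  assumes "barrier B" and "infinite X" and "X \<subseteq> \<Union>B"
  shows "\<exists>\<sigma>. \<forall>k. \<sigma> k \<in> B \<and> \<sigma> k \<subseteq> X \<and> \<sigma> k \<lhd>\<^sub>B \<sigma> (Suc k)"
proof -
  define Xs where "Xs k = ((\<lambda>Y. Y - {Inf Y}) ^^ k) X" for k
  have Xs_Suc: "Xs (Suc k) = Xs k - {Inf (Xs k)}" for k
    unfolding Xs_def by simp
  have Xs: "infinite (Xs k) \<and> Xs k \<subseteq> X" for k
    by (induction k) (auto simp: Xs_Suc Xs_def[of 0] assms(2))
  have "\<forall>k. \<exists>s. s \<in> B \<and> s \<noteq> {} \<and> initial_segment s (Xs k)"
  proof
    fix k
    have "Xs k \<subseteq> \<Union>B"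
      using Xs[of k] assms(3) by blast
    then show "\<exists>s. s \<in> B \<and> s \<noteq> {} \<and> initial_segment s (Xs k)"
      using barrier_initial_segment[OF assms(1)] Xs[of k] by blast
  qed
  then obtain \<sigma> where \<sigma>: "\<forall>k. \<sigma> k \<in> B \<and> \<sigma> k \<noteq> {} \<and> initial_segment (\<sigma> k) (Xs k)"
    by (rule choice[THEN exE])
  have "\<sigma> k \<lhd>\<^sub>B \<sigma> (Suc k)" for k
    using \<sigma>[THEN spec, of k] \<sigma>[THEN spec, of "Suc k"]
    by (intro initial_segments_shift_rel[OF barrier_thin[OF assms(1)], where X = "Xs k"])
      (simp_all add: Xs_Suc)
  moreover have "\<sigma> k \<subseteq> X" for k
    using \<sigma> Xs[of k] unfolding initial_segment_def by blast
  ultimately show ?thesis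
    using \<sigma> by blast
qed

lemma bqo_on_finitely_many_ranked_classes:
  fixes c :: "'a \<Rightarrow> 'b" and rank :: "'a \<Rightarrow> nat"
  assumes "finite (c ` Q)"
    and ranked: "\<And>x y. x \<in> Q \<Longrightarrow> y \<in> Q \<Longrightarrow> c x = c y \<Longrightarrow> \<not> le x y \<Longrightarrow> rank y < rank x"
  shows "bqo_on Q le"
  unfolding bqo_on_def
proof (intro allI impI, elim conjE, rule ccontr)
  fix B f
  assume B: "barrier B" and f: "\<forall>s\<in>B. f s \<in> Q" and bad: "\<not> good_map le B f"
  have "infinite (\<Union>B)"
    using B finite_UnionD unfolding barrier_def by blast
  then obtain N i where N: "N \<subseteq> \<Union>B" "infinite N" and i: "\<forall>s\<in>B. s \<subseteq> N \<longrightarrow> c (f s) = i"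
    using thin_colouring_homogeneous[OF barrier_thin[OF B] assms(1), of "\<Union>B" "c \<circ> f"] f by auto
  obtain \<sigma> where \<sigma>: "\<And>k. \<sigma> k \<in> B \<and> \<sigma> k \<subseteq> N \<and> \<sigma> k \<lhd>\<^sub>B \<sigma> (Suc k)"
    using barrier_shift_sequence[OF B N(2,1)] by blast
  have "rank (f (\<sigma> (Suc k))) < rank (f (\<sigma> k))" for k
  proof (rule ranked)
    show "f (\<sigma> k) \<in> Q" "f (\<sigma> (Suc k)) \<in> Q"
      using f \<sigma> by auto
    show "c (f (\<sigma> k)) = c (f (\<sigma> (Suc k)))"
      using i \<sigma> by metis
    show "\<not> le (f (\<sigma> k)) (f (\<sigma> (Suc k)))"
      using bad \<sigma> unfolding good_map_def by blast
  qed
  then show False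
    using wf_no_infinite_down_chainE[OF wf_less, of "\<lambda>k. rank (f (\<sigma> k))"] by auto
qed

section \<open>Rado's poset\<close>

lemma max_antichain_on_absorbs:
  assumes "max_antichain_on P le A" and "x \<in> P" and "\<forall>y\<in>A. \<not> le x y \<and> \<not> le y x"
  shows "x \<in> A"
proof -
  have "antichain_on P le (insert x A)"
    using assms unfolding max_antichain_on_def antichain_on_def by blast
  then show ?thesis
    using assms(1) unfolding max_antichain_on_def by blast
qed

lemma max_antichain_onI:
  assumes "antichain_on P le A" and "\<And>x. x \<in> P \<Longrightarrow> x \<notin> A \<Longrightarrow> \<exists>y\<in>A. le x y \<or> le y x"
  shows "max_antichain_on P le A"
  unfolding max_antichain_on_def
proof (intro conjI allI impI)
  fix C assume C: "antichain_on P le C \<and> A \<subseteq> C"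
  have "x \<in> A" if "x \<in> C" for x
  proof (rule ccontr)
    assume "x \<notin> A"
    moreover have "x \<in> P"
      using C \<open>x \<in> C\<close> unfolding antichain_on_def by blast
    ultimately obtain y where "y \<in> A" "le x y \<or> le y x"
      using assms(2) by blast
    moreover have "y \<in> C" "x \<noteq> y"
      using C \<open>y \<in> A\<close> \<open>x \<notin> A\<close> by auto
    ultimately show False
      using C \<open>x \<in> C\<close> unfolding antichain_on_def by metis
  qed
  with C show "C = A"
    by blast
qed (rule assms(1))

lemma rado_le_same_fst: "fst x = fst y \<Longrightarrow> rado_le x y \<or> rado_le y x"
  unfolding rado_le_def by auto

lemma rado_max_antichain_fst_less:
  assumes A: "max_antichain_on rado_V rado_le A" "finite A" and "x \<in> A"
  shows "fst x < card A"
proof (rule ccontr)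
  assume "\<not> fst x < card A"
  have antichain: "antichain_on rado_V rado_le A"
    using A(1) unfolding max_antichain_on_def by blast
  then have "inj_on fst A"
    using rado_le_same_fst unfolding antichain_on_def inj_on_def by metis
  then have "\<not> {..fst x} \<subseteq> fst ` A"
    using \<open>\<not> fst x < card A\<close> card_mono[OF finite_imageI[OF A(2)]] card_image by fastforce
  then obtain c where c: "c \<le> fst x" "c \<notin> fst ` A"
    by auto
  define d where "d = c + 1 + Max (fst ` A)"
  have "(c, d) \<in> A"
  proof (rule max_antichain_on_absorbs[OF A(1)])
    show "(c, d) \<in> rado_V"
      unfolding rado_V_def d_def by simp
    show "\<forall>y\<in>A. \<not> rado_le (c, d) y \<and> \<not> rado_le y (c, d)"
    proof
      fix y assume "y \<in> A"
      then have "fst y \<noteq> c" "fst y \<le> Max (fst ` A)" "fst y < snd y"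
        using c(2) A(2) antichain unfolding antichain_on_def rado_V_def by auto
      moreover have "c \<le> snd y"
      proof (cases "fst y < c")
        case True
        then have "y \<noteq> x"
          using c(1) by auto
        then have "\<not> rado_le y x"
          using antichain \<open>y \<in> A\<close> \<open>x \<in> A\<close> unfolding antichain_on_def by blast
        then show ?thesis
          using c(1) unfolding rado_le_def by auto
      next
        case False
        then show ?thesis
          using \<open>fst y < snd y\<close> by simp
      qed
      ultimately show "\<not> rado_le (c, d) y \<and> \<not> rado_le y (c, d)"
        unfolding rado_le_def d_def by auto
    qed
  qed
  then show False
    using c(2) by force
qed

text \<open>
  All heights of the antichain of (m, n) are at most 2n+3, so it lies below the point
  (2m'+2, 2m'+3) of the antichain of (m', n') as soon as n < m'.
\<close>

definition column_height :: "nat \<Rightarrow> nat \<Rightarrow> nat \<Rightarrow> nat" where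
  "column_height m n i = (if i = m then 2 * n + 3 else if i = 2 * m + 2 then 2 * m + 3 else 2 * m + 2)"

fun rado_embedding :: "nat \<times> nat \<Rightarrow> (nat \<times> nat) set" where
  "rado_embedding (m, n) = (\<lambda>i. (i, column_height m n i)) ` {..2 * m + 2}"

lemma rado_embedding_max_antichain:
  assumes "m < n"
  shows "max_antichain_on rado_V rado_le (rado_embedding (m, n))"
proof (rule max_antichain_onI)
  show "antichain_on rado_V rado_le (rado_embedding (m, n))"
    unfolding antichain_on_def rado_V_def rado_le_def using assms by (auto simp: column_height_def)
  fix x assume "x \<in> rado_V"
  show "\<exists>y\<in>rado_embedding (m, n). rado_le x y \<or> rado_le y x"
  proof (cases "fst x \<le> 2 * m + 2")
    case True
    then show ?thesis
      using rado_le_same_fst[of x "(fst x, column_height m n (fst x))"] by auto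
  next
    case False
    then have "rado_le (m + 1, column_height m n (m + 1)) x"
      unfolding rado_le_def column_height_def by auto
    then show ?thesis
      by force
  qed
qed

lemma rado_le_imp_dominated:
  assumes "m < n" and "rado_le (m, n) (m', n')"
  shows "dominated rado_le (rado_embedding (m, n)) (rado_embedding (m', n'))"
  unfolding dominated_def
proof
  fix x assume "x \<in> rado_embedding (m, n)"
  then obtain i where i: "i \<le> 2 * m + 2" "x = (i, column_height m n i)"
    by auto
  show "\<exists>y\<in>rado_embedding (m', n'). rado_le x y"
  proof (cases "m = m' \<and> n \<le> n'")
    case True
    then have "rado_le x (i, column_height m' n' i)"
      using i unfolding rado_le_def column_height_def by auto
    then show ?thesis
      using i True by auto
  next
    case False
    then have "n < m'"
      using assms(2) unfolding rado_le_def by auto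
    then have "rado_le x (2 * m' + 2, column_height m' n' (2 * m' + 2))"
      using i assms(1) unfolding rado_le_def column_height_def by auto
    then show ?thesis
      by auto
  qed
qed

lemma dominated_imp_rado_le:
  assumes "m < n" and "dominated rado_le (rado_embedding (m, n)) (rado_embedding (m', n'))"
  shows "rado_le (m, n) (m', n')"
proof -
  have "(m, 2 * n + 3) \<in> rado_embedding (m, n)"
    by (force simp: column_height_def)
  then obtain y where "y \<in> rado_embedding (m', n')" "rado_le (m, 2 * n + 3) y"
    using assms(2) unfolding dominated_def by blast
  then obtain j where "j \<le> 2 * m' + 2" "rado_le (m, 2 * n + 3) (j, column_height m' n' j)"
    by auto
  then show ?thesis
    using assms(1) unfolding rado_le_def column_height_def by (auto split: if_splits)
qed

theorem lemma6p5:
  shows "(\<forall>m::nat. bqo_on (\<Union>(AM_card m)) rado_le)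
         \<and> (\<exists>e. (\<forall>x\<in>rado_V. e x \<in> AM)
               \<and> (\<forall>x\<in>rado_V. \<forall>y\<in>rado_V. rado_le x y \<longleftrightarrow> dominated rado_le (e x) (e y)))"
proof (intro conjI allI)
  fix m :: nat
  have "fst ` \<Union>(AM_card m) \<subseteq> {..<m}"
    using rado_max_antichain_fst_less unfolding AM_card_def AM_def by fastforce
  moreover have "snd y < snd x"
    if "fst x = fst y" "\<not> rado_le x y" for x y :: "nat \<times> nat"
    using that unfolding rado_le_def by auto
  ultimately show "bqo_on (\<Union>(AM_card m)) rado_le"
    by (intro bqo_on_finitely_many_ranked_classes[where c = fst and rank = snd])
      (auto intro: finite_subset)
next
  show "\<exists>e. (\<forall>x\<in>rado_V. e x \<in> AM)
      \<and> (\<forall>x\<in>rado_V. \<forall>y\<in>rado_V. rado_le x y \<longleftrightarrow> dominated rado_le (e x) (e y))"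
    using rado_embedding_max_antichain rado_le_imp_dominated dominated_imp_rado_le
    unfolding AM_def rado_V_def by (intro exI[of _ rado_embedding]) auto
qed

end
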